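(* Let $\mathbf{x}_1,\dots,\mathbf{x}_n\in\mathbb{R}^d$, $y_1,\dots,y_n\in\mathbb{R}$ and $\mathbf{v}\in\mathbb{R}^k$ be arbitrary. Any $\widetilde{\mathbf{W}}\in\mathbb{R}^{k\times d}$ satisfying $$\frac1n\sum_{i=1}^n\big(\mathbf{x}_i^T\widetilde{\mathbf{W}}^T\mathrm{diag}(\mathbf{v})\widetilde{\mathbf{W}}\mathbf{x}_i-y_i\big)\mathbf{x}_i\mathbf{x}_i^T=\mathbf{0}$$ is a global minimizer over $\mathbf{W}\in\mathbb{R}^{k\times d}$ of $\mathcal{L}(\mathbf{W})=\frac1{2n}\sum_{i=1}^n\big(\mathbf{x}_i^T\mathbf{W}^T\mathrm{diag}(\mathbf{v})\mathbf{W}\mathbf{x}_i-y_i\big)^2$. *)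

theory Defs
  imports "HOL-Analysis.Analysis"
begin

definition diag_mat :: "real^'k \<Rightarrow> real^'k^'k" where
  "diag_mat v = (\<chi> i j. if i = j then v $ i else 0)"

definition outer :: "real^'d \<Rightarrow> real^'d^'d" where
  "outer x = (\<chi> i j. x $ i * x $ j)"

definition qpred :: "real^'d^'k \<Rightarrow> real^'k \<Rightarrow> real^'d \<Rightarrow> real" where
  "qpred W v x = x \<bullet> ((transpose W ** diag_mat v ** W) *v x)"

definition loss :: "nat \<Rightarrow> (nat \<Rightarrow> real^'d) \<Rightarrow> (nat \<Rightarrow> real) \<Rightarrow> real^'k \<Rightarrow> real^'d^'k \<Rightarrow> real" where
  "loss n x y v W = (1 / (2 * real n)) * (\<Sum>i = 1..n. (qpred W v (x i) - y i)^2)"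

end

theory Submission
  imports Defs
begin

(* The prediction x^T W^T diag(v) W x depends on W only through M = W^T diag(v) W, and linearly:
  it is the Frobenius pairing of M with outer x. So the loss is a least-squares objective in M, and
  the hypothesis says the residuals are orthogonal to the predictions' change under any change of M.
  By Pythagoras no matrix M, in particular none of the form W^T diag(v) W, does better. *)

lemma inner_mult_vec_eq_outer_pairing:
  fixes A :: "real^'d^'d"
  shows "z \<bullet> (A *v z) = (\<Sum>a\<in>UNIV. \<Sum>b\<in>UNIV. A$a$b * outer z $a$b)"
  by (simp add: inner_vec_def matrix_vector_mult_def outer_def sum_distrib_left mult_ac)

lemma sum_weighted_quadratic_form_eq_0:
  fixes A :: "real^'d^'d" and x :: "'i \<Rightarrow> real^'d"
  assumes "(\<Sum>i\<in>I. r i *\<^sub>R outer (x i)) = 0"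
  shows "(\<Sum>i\<in>I. r i * (x i \<bullet> (A *v x i))) = 0"
proof -
  have "(\<Sum>i\<in>I. r i * (x i \<bullet> (A *v x i)))
      = (\<Sum>a\<in>UNIV. \<Sum>b\<in>UNIV. A$a$b * (\<Sum>i\<in>I. r i *\<^sub>R outer (x i)) $a$b)"
    by (simp add: inner_mult_vec_eq_outer_pairing sum_component sum_distrib_left
        sum.swap[of _ I] mult_ac)
  then show ?thesis using assms by simp
qed

lemma sum_power2_le_sum_power2_add_orthogonal:
  fixes r d :: "'i \<Rightarrow> real"
  assumes "(\<Sum>i\<in>I. r i * d i) = 0"
  shows "(\<Sum>i\<in>I. (r i)\<^sup>2) \<le> (\<Sum>i\<in>I. (r i + d i)\<^sup>2)"
proof -
  have "(\<Sum>i\<in>I. (r i + d i)\<^sup>2)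
      = (\<Sum>i\<in>I. (r i)\<^sup>2) + 2 * (\<Sum>i\<in>I. r i * d i) + (\<Sum>i\<in>I. (d i)\<^sup>2)"
    by (simp add: power2_sum sum.distrib sum_distrib_left mult.assoc)
  moreover have "0 \<le> (\<Sum>i\<in>I. (d i)\<^sup>2)"
    by (simp add: sum_nonneg)
  ultimately show ?thesis
    using assms by simp
qed

lemma least_squares_quadratic_forms:
  fixes M M0 :: "real^'d^'d" and x :: "'i \<Rightarrow> real^'d"
  assumes "(\<Sum>i\<in>I. (x i \<bullet> (M0 *v x i) - y i) *\<^sub>R outer (x i)) = 0"
  shows "(\<Sum>i\<in>I. (x i \<bullet> (M0 *v x i) - y i)\<^sup>2) \<le> (\<Sum>i\<in>I. (x i \<bullet> (M *v x i) - y i)\<^sup>2)"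
proof -
  define r where "r i = x i \<bullet> (M0 *v x i) - y i" for i
  define d where "d i = x i \<bullet> ((M - M0) *v x i)" for i
  have "(\<Sum>i\<in>I. r i * d i) = 0"
    unfolding r_def d_def using assms by (rule sum_weighted_quadratic_form_eq_0)
  then have "(\<Sum>i\<in>I. (r i)\<^sup>2) \<le> (\<Sum>i\<in>I. (r i + d i)\<^sup>2)"
    by (rule sum_power2_le_sum_power2_add_orthogonal)
  also have "\<dots> = (\<Sum>i\<in>I. (x i \<bullet> (M *v x i) - y i)\<^sup>2)"
    by (simp add: r_def d_def matrix_vector_mult_diff_rdistrib inner_diff_right)
  finally show ?thesis
    unfolding r_def .
qed

theorem lemma6p1:
  fixes n :: nat and x :: "nat \<Rightarrow> real^'d" and y :: "nat \<Rightarrow> real"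
    and v :: "real^'k" and Wt :: "real^'d^'k"
  assumes "(1 / real n) *\<^sub>R (\<Sum>i = 1..n. (qpred Wt v (x i) - y i) *\<^sub>R outer (x i)) = 0"
  shows "\<forall>W :: real^'d^'k. loss n x y v Wt \<le> loss n x y v W"
proof
  fix W :: "real^'d^'k"
  show "loss n x y v Wt \<le> loss n x y v W"
  proof (cases "n = 0")
    case True
    then show ?thesis by (simp add: loss_def)
  next
    case False
    then have "(\<Sum>i = 1..n. (qpred Wt v (x i) - y i) *\<^sub>R outer (x i)) = 0"
      using assms by simp
    then have "(\<Sum>i = 1..n. (qpred Wt v (x i) - y i)\<^sup>2) \<le> (\<Sum>i = 1..n. (qpred W v (x i) - y i)\<^sup>2)"
      unfolding qpred_def by (rule least_squares_quadratic_forms)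
    then show ?thesis
      unfolding loss_def by (intro mult_left_mono) auto
  qed
qed

end
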